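(* Let $\mathcal{A}$ be a finite abelian group. Then $$\Psi_{\mathcal{A}}(x)=\sum_{K\le\mathcal{A}}\mu(K)\left((1+x^2)^{\frac{|K|-|O_2(K)|-1}{2}}(1+x)^{|O_2(K)|}-1\right),$$ and hence $$\mathcal{E}(\mathcal{A})=\Psi_{\mathcal{A}}(1)=\sum_{K\le\mathcal{A}}\mu(K)\left(2^{\frac{|K|+|O_2(K)|-1}{2}}-1\right).$$
   Context: For a finite group $\mathcal{A}$ with identity $e$, let $G(\mathcal{A})=\{\Omega\subseteq\mathcal{A}:\Omega^{-1}=\Omega,\ \langle\Omega\rangle=\mathcal{A},\ e\notin\Omega\}$. For $k\ge1$ let $a_k(\mathcal{A})$ be the number of orbits of the inner automorphism group $\mathrm{Inn}(\mathcal{A})$ (acting by $\alpha\cdot\Omega=\alpha(\Omega)$) on $\{\Omega\in G(\mathcal{A}):|\Omega|=k\}$ (the number of equivalence classes of Cayley graphs of $\mathcal{A}$ of degree $k$); $\Psi_{\mathcal{A}}(x)=\sum_{k=1}^{|\mathcal{A}|-1}a_k(\mathcal{A})x^k$ and $\mathcal{E}(\mathcal{A})=\Psi_{\mathcal{A}}(1)$. For a subgroup $K$, $O_2(K)=\{g\in K:g^2=e,\ g\ne e\}$. The Möbius function $\mu$ on the subgroup lattice of $\mathcal{A}$ is defined recursively by $\sum_{H\ge K}\mu(H)=1$ if $K=\mathcal{A}$ and $=0$ if $K<\mathcal{A}$. *)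

theory Defs
  imports "HOL-Algebra.Algebra"
begin

definition gen_sets :: "('a, 'b) monoid_scheme \<Rightarrow> 'a set set" where
  "gen_sets G = {\<Omega>. \<Omega> \<subseteq> carrier G \<and> (\<lambda>x. inv\<^bsub>G\<^esub> x) ` \<Omega> = \<Omega>
                     \<and> generate G \<Omega> = carrier G \<and> \<one>\<^bsub>G\<^esub> \<notin> \<Omega>}"

definition inner_aut :: "('a, 'b) monoid_scheme \<Rightarrow> 'a \<Rightarrow> 'a \<Rightarrow> 'a" where
  "inner_aut G g = (\<lambda>x. g \<otimes>\<^bsub>G\<^esub> x \<otimes>\<^bsub>G\<^esub> inv\<^bsub>G\<^esub> g)"

definition cayley_count :: "('a, 'b) monoid_scheme \<Rightarrow> nat \<Rightarrow> nat" where
  "cayley_count G k = card {{inner_aut G g ` \<Omega> | g. g \<in> carrier G} | \<Omega>.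
                              \<Omega> \<in> gen_sets G \<and> card \<Omega> = k}"

definition Psi :: "('a, 'b) monoid_scheme \<Rightarrow> real \<Rightarrow> real" where
  "Psi G x = (\<Sum>k = 1..card (carrier G) - 1. real (cayley_count G k) * x ^ k)"

definition Ecount :: "('a, 'b) monoid_scheme \<Rightarrow> real" where
  "Ecount G = Psi G 1"

definition O2 :: "('a, 'b) monoid_scheme \<Rightarrow> 'a set \<Rightarrow> 'a set" where
  "O2 G K = {g \<in> K. g \<otimes>\<^bsub>G\<^esub> g = \<one>\<^bsub>G\<^esub> \<and> g \<noteq> \<one>\<^bsub>G\<^esub>}"

definition sg_mobius :: "('a, 'b) monoid_scheme \<Rightarrow> 'a set \<Rightarrow> int" where
  "sg_mobius G = (THE f. (\<forall>K. subgroup K G \<longrightarrow>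
        (\<Sum>H\<in>{H. subgroup H G \<and> K \<subseteq> H}. f H) = (if K = carrier G then 1 else 0))
      \<and> (\<forall>K. \<not> subgroup K G \<longrightarrow> f K = 0))"

end

theory Submission
  imports Defs
begin

(* In an abelian group every inner automorphism is trivial, so the number
   a_k of equivalence classes of Cayley graphs of degree k is simply the number of
   generating sets in G(A) of size k, and Psi_A(x) is the generating polynomial of the
   non-empty sets in G(A).  For a subgroup K let P_K(x) be the generating polynomial of
   all inverse-closed subsets of K - {e}.  Such a subset is a union of "inverse pairs"
   {g, g^-1}; there are |O_2(K)| pairs of size 1 and (|K| - |O_2(K)| - 1)/2 pairs of
   size 2, whence P_K(x) = (1 + x^2)^((|K|-|O_2(K)|-1)/2) (1 + x)^|O_2(K)|.  Grouping the
   subsets of K by the subgroup they generate gives P_K = sum_{H <= K} F_H, where F_H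
   counts inverse-closed subsets generating exactly H, and Moebius inversion on the
   subgroup lattice yields F_A = sum_K mu(K) P_K.  Since sum_K mu(K) is 1 exactly for the
   trivial group, whose only inverse-closed generating set is empty, this gives the
   formula for Psi. *)

section \<open>The Moebius function of the subgroup lattice\<close>

lemma finite_subgroups:
  "finite (carrier G) \<Longrightarrow> finite {H. subgroup H G \<and> P H}"
  by (rule finite_subset[of _ "Pow (carrier G)"]) (auto dest: subgroup.subset)

text \<open>Passing to a strictly larger subgroup decreases the index measure; this is the
  well-founded order behind both the recursive definition and the uniqueness proof.\<close>

lemma subgroup_psubset_measure:
  assumes "finite (carrier G)" "subgroup H G" "K \<subset> H"
  shows "card (carrier G) - card H < card (carrier G) - card K"
proof -
  have H: "H \<subseteq> carrier G" using assms(2) by (rule subgroup.subset)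
  then have "card K < card H" using assms by (meson psubset_card_mono finite_subset)
  moreover have "card H \<le> card (carrier G)" using H assms(1) by (rule card_mono[rotated])
  ultimately show ?thesis by linarith
qed

function mobius_rec :: "('a,'b) monoid_scheme \<Rightarrow> 'a set \<Rightarrow> int" where
  "mobius_rec G K = (if subgroup K G \<and> finite (carrier G) then
      (if K = carrier G then 1 else 0) - (\<Sum>H\<in>{H. subgroup H G \<and> K \<subset> H}. mobius_rec G H)
    else 0)"
  by auto
termination
  by (relation "measure (\<lambda>(G,K). card (carrier G) - card K)")
     (auto intro: subgroup_psubset_measure)

declare mobius_rec.simps[simp del]

definition is_subgroup_mobius :: "('a,'b) monoid_scheme \<Rightarrow> ('a set \<Rightarrow> int) \<Rightarrow> bool" where
  "is_subgroup_mobius G f \<longleftrightarrow> (\<forall>K. subgroup K G \<longrightarrow>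
        (\<Sum>H\<in>{H. subgroup H G \<and> K \<subseteq> H}. f H) = (if K = carrier G then 1 else 0))
      \<and> (\<forall>K. \<not> subgroup K G \<longrightarrow> f K = 0)"

lemma sum_supergroups_split:
  assumes "finite (carrier G)" "subgroup K G"
  shows "(\<Sum>H\<in>{H. subgroup H G \<and> K \<subseteq> H}. f H)
         = f K + (\<Sum>H\<in>{H. subgroup H G \<and> K \<subset> H}. f H)"
proof -
  have "{H. subgroup H G \<and> K \<subseteq> H} = insert K {H. subgroup H G \<and> K \<subset> H}"
    using assms by auto
  then show ?thesis using finite_subgroups[OF assms(1)] by simp
qed

text \<open>The recursion is exactly the defining property, so a Moebius function exists ...\<close>

lemma mobius_rec_is_mobius:
  "finite (carrier G) \<Longrightarrow> is_subgroup_mobius G (mobius_rec G)"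
  unfolding is_subgroup_mobius_def
proof (intro conjI allI impI)
  fix K assume "finite (carrier G)" "subgroup K G"
  then show "(\<Sum>H\<in>{H. subgroup H G \<and> K \<subseteq> H}. mobius_rec G H) = (if K = carrier G then 1 else 0)"
    by (simp add: sum_supergroups_split mobius_rec.simps[of G K])
next
  fix K assume "\<not> subgroup K G"
  then show "mobius_rec G K = 0" by (simp add: mobius_rec.simps)
qed

text \<open>... and it is unique, by induction on the index measure.\<close>

lemma subgroup_mobius_unique:
  assumes fin: "finite (carrier G)"
    and f: "is_subgroup_mobius G f" and g: "is_subgroup_mobius G g"
  shows "f K = g K"
proof (induction "card (carrier G) - card K" arbitrary: K rule: less_induct)
  case less
  show ?case
  proof (cases "subgroup K G")
    case False
    then show ?thesis using f g by (simp add: is_subgroup_mobius_def)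
  next
    case K: True
    have "(\<Sum>H\<in>{H. subgroup H G \<and> K \<subset> H}. f H) = (\<Sum>H\<in>{H. subgroup H G \<and> K \<subset> H}. g H)"
      using less subgroup_psubset_measure[OF fin] by (intro sum.cong) auto
    moreover have "f K + (\<Sum>H\<in>{H. subgroup H G \<and> K \<subset> H}. f H)
                 = g K + (\<Sum>H\<in>{H. subgroup H G \<and> K \<subset> H}. g H)"
      using f g K unfolding is_subgroup_mobius_def sum_supergroups_split[OF fin K, symmetric]
      by simp
    ultimately show ?thesis by simp
  qed
qed

text \<open>Consequently the definite description in sg_mobius denotes the Moebius function.\<close>

lemma sg_mobius_is_mobius:
  assumes "finite (carrier G)"
  shows "is_subgroup_mobius G (sg_mobius G)"
proof -
  have "sg_mobius G = mobius_rec G"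
    unfolding sg_mobius_def is_subgroup_mobius_def[symmetric]
    using mobius_rec_is_mobius[OF assms] subgroup_mobius_unique[OF assms]
    by (intro the_equality) auto
  then show ?thesis using mobius_rec_is_mobius[OF assms] by simp
qed

context group begin

lemma finite_subgroup: "finite (carrier G) \<Longrightarrow> subgroup K G \<Longrightarrow> finite K"
  by (meson finite_subset subgroup.subset)

lemma sum_mobius_supergroups:
  assumes "finite (carrier G)" "subgroup H G"
  shows "(\<Sum>K\<in>{K. subgroup K G \<and> H \<subseteq> K}. of_int (sg_mobius G K) :: 'c::comm_ring_1)
         = (if H = carrier G then 1 else 0)"
proof -
  have "(\<Sum>K\<in>{K. subgroup K G \<and> H \<subseteq> K}. sg_mobius G K) = (if H = carrier G then 1 else 0)"
    using sg_mobius_is_mobius[OF assms(1)] assms(2) unfolding is_subgroup_mobius_def by blast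
  then show ?thesis by (simp flip: of_int_sum)
qed

text \<open>The sum of all values of the Moebius function is 1 for the trivial group and 0
  otherwise; this accounts for the constant terms in the formula.\<close>

lemma sum_mobius:
  assumes "finite (carrier G)"
  shows "(\<Sum>K\<in>{K. subgroup K G}. of_int (sg_mobius G K) :: 'c::comm_ring_1)
         = (if carrier G = {\<one>} then 1 else 0)"
proof -
  have "{K. subgroup K G \<and> {\<one>} \<subseteq> K} = {K. subgroup K G}"
    using subgroup.one_closed by blast
  then show ?thesis
    using sum_mobius_supergroups[OF assms triv_subgroup, where 'c = 'c] by (simp add: eq_commute)
qed

lemma mobius_inversion:
  fixes F P :: "'a set \<Rightarrow> 'c::comm_ring_1"
  assumes fin: "finite (carrier G)"
    and P: "\<And>K. subgroup K G \<Longrightarrow> P K = (\<Sum>H\<in>{H. subgroup H G \<and> H \<subseteq> K}. F H)"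
  shows "(\<Sum>K\<in>{K. subgroup K G}. of_int (sg_mobius G K) * P K) = F (carrier G)"
proof -
  let ?Sg = "{K. subgroup K G}" and ?\<mu> = "\<lambda>K. of_int (sg_mobius G K) :: 'c"
  have finSg: "finite ?Sg" using finite_subgroups[OF fin, of "\<lambda>_. True"] by simp
  have "(\<Sum>K\<in>?Sg. ?\<mu> K * P K) = (\<Sum>K\<in>?Sg. \<Sum>H\<in>{H\<in>?Sg. H \<subseteq> K}. ?\<mu> K * F H)"
    by (intro sum.cong) (simp_all add: P sum_distrib_left)
  also have "\<dots> = (\<Sum>H\<in>?Sg. \<Sum>K\<in>{K\<in>?Sg. H \<subseteq> K}. ?\<mu> K * F H)"
    by (rule sum.swap_restrict[OF finSg finSg])
  also have "\<dots> = (\<Sum>H\<in>?Sg. if H = carrier G then F H else 0)"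
    by (intro sum.cong)
       (simp_all add: sum_distrib_right[symmetric] sum_mobius_supergroups[OF fin])
  also have "\<dots> = F (carrier G)"
    using finSg subgroup_self by (simp add: sum.delta)
  finally show ?thesis .
qed

end

section \<open>Counting inverse-closed subsets\<close>

lemma sum_power_card_Union_Pow:
  fixes x :: "'c::comm_semiring_1"
  assumes fin: "finite \<F>" and disj: "disjoint \<F>" and fin_mem: "\<And>A. A \<in> \<F> \<Longrightarrow> finite A"
  shows "(\<Sum>T\<in>Pow \<F>. x ^ card (\<Union>T)) = (\<Prod>A\<in>\<F>. x ^ card A + 1)"
proof -
  have "x ^ card (\<Union>T) = (\<Prod>A\<in>T. x ^ card A) * (\<Prod>A\<in>\<F> - T. 1)" if "T \<in> Pow \<F>" for T
  proof -
    have "card (\<Union>T) = sum card T"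
      using that by (intro card_Union_disjoint pairwise_subset[OF disj]) (auto intro: fin_mem)
    moreover have "finite T" using that fin finite_subset by auto
    ultimately show ?thesis by (simp add: power_sum)
  qed
  then have "(\<Sum>T\<in>Pow \<F>. x ^ card (\<Union>T))
             = (\<Sum>T\<in>Pow \<F>. (\<Prod>A\<in>T. x ^ card A) * (\<Prod>A\<in>\<F> - T. 1))"
    by (rule sum.cong[OF refl])
  also have "\<dots> = (\<Prod>A\<in>\<F>. x ^ card A + 1)"
    by (rule prod_add[OF fin, symmetric])
  finally show ?thesis .
qed

lemma inj_on_Union_Pow:
  assumes disj: "disjoint \<F>" and nonempty: "{} \<notin> \<F>"
  shows "inj_on Union (Pow \<F>)"
proof -
  have sub: "T \<subseteq> T'" if T: "T \<subseteq> \<F>" "T' \<subseteq> \<F>" and eq: "\<Union>T = \<Union>T'" for T T'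
  proof
    fix A assume A: "A \<in> T"
    have "A \<noteq> {}" using A T(1) nonempty by blast
    then obtain a where a: "a \<in> A" by blast
    then obtain A' where A': "A' \<in> T'" "a \<in> A'" using A eq by blast
    then have "A = A'" using disj A a T unfolding pairwise_def disjnt_def by blast
    then show "A \<in> T'" using A' by simp
  qed
  show ?thesis
  proof (rule inj_onI)
    fix T T' assume "T \<in> Pow \<F>" "T' \<in> Pow \<F>" "\<Union>T = \<Union>T'"
    then show "T = T'" using sub[of T T'] sub[of T' T] by auto
  qed
qed

lemma (in comm_monoid_set) split_card_one_two:
  assumes fin: "finite \<F>" and sizes: "\<And>A. A \<in> \<F> \<Longrightarrow> card A = 1 \<or> card A = 2"
  shows "F g \<F> = F g {A \<in> \<F>. card A = 1} \<^bold>* F g {A \<in> \<F>. card A = 2}"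
proof -
  let ?\<F>1 = "{A \<in> \<F>. card A = 1}" and ?\<F>2 = "{A \<in> \<F>. card A = 2}"
  have "\<F> = ?\<F>1 \<union> ?\<F>2" using sizes by blast
  then have "F g \<F> = F g (?\<F>1 \<union> ?\<F>2)" by (rule arg_cong)
  also have "\<dots> = F g ?\<F>1 \<^bold>* F g ?\<F>2"
  proof (rule union_disjoint)
    show "?\<F>1 \<inter> ?\<F>2 = {}" by auto
  qed (simp_all add: fin)
  finally show ?thesis .
qed

context group begin

definition sym_subsets :: "'a set \<Rightarrow> 'a set set" where
  "sym_subsets K = {\<Omega>. \<Omega> \<subseteq> K \<and> (\<lambda>g. inv g) ` \<Omega> = \<Omega> \<and> \<one> \<notin> \<Omega>}"

text \<open>The inverse pairs {g, g^-1} of the non-identity elements of K; every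
  inverse-closed subset of K - {e} is a union of such pairs.\<close>

definition inverse_pairs :: "'a set \<Rightarrow> 'a set set" where
  "inverse_pairs K = (\<lambda>g. {g, inv g}) ` (K - {\<one>})"

lemma finite_inverse_pair: "A \<in> inverse_pairs K \<Longrightarrow> finite A"
  unfolding inverse_pairs_def by auto

lemma inverse_pairs_disjoint:
  assumes "K \<subseteq> carrier G"
  shows "disjoint (inverse_pairs K)"
proof (rule pairwiseI)
  fix A B assume "A \<in> inverse_pairs K" "B \<in> inverse_pairs K" "A \<noteq> B"
  then obtain g h where "g \<in> carrier G" "h \<in> carrier G" "A = {g, inv g}" "B = {h, inv h}"
    using assms unfolding inverse_pairs_def by auto
  then show "disjnt A B" using \<open>A \<noteq> B\<close> unfolding disjnt_def by (auto simp: inv_equality)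
qed

lemma inverse_pairs_subset:
  assumes "subgroup K G" "A \<in> inverse_pairs K"
  shows "A \<subseteq> K - {\<one>}"
  using assms subgroup.subset[OF assms(1)]
  unfolding inverse_pairs_def by (auto intro: subgroup.m_inv_closed)

lemma Union_inverse_pairs:
  assumes "subgroup K G"
  shows "\<Union>(inverse_pairs K) = K - {\<one>}"
  using inverse_pairs_subset[OF assms] unfolding inverse_pairs_def by blast

lemma sym_subsets_eq_Unions:
  assumes K: "subgroup K G"
  shows "sym_subsets K = Union ` Pow (inverse_pairs K)"
proof
  show "sym_subsets K \<subseteq> Union ` Pow (inverse_pairs K)"
  proof
    fix \<Omega> assume "\<Omega> \<in> sym_subsets K"
    then have \<Omega>: "\<Omega> \<subseteq> K" "(\<lambda>g. inv g) ` \<Omega> = \<Omega>" "\<one> \<notin> \<Omega>"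
      unfolding sym_subsets_def by auto
    have "{g, inv g} \<in> inverse_pairs K \<and> {g, inv g} \<subseteq> \<Omega>" if "g \<in> \<Omega>" for g
      using that \<Omega> unfolding inverse_pairs_def by blast
    then have "\<Omega> = \<Union>{A \<in> inverse_pairs K. A \<subseteq> \<Omega>}" by blast
    then show "\<Omega> \<in> Union ` Pow (inverse_pairs K)" by blast
  qed
  show "Union ` Pow (inverse_pairs K) \<subseteq> sym_subsets K"
  proof
    fix \<Omega> assume "\<Omega> \<in> Union ` Pow (inverse_pairs K)"
    then obtain T where T: "T \<subseteq> inverse_pairs K" "\<Omega> = \<Union>T" by blast
    have "(\<lambda>g. inv g) ` A = A" if "A \<in> inverse_pairs K" for A
      using that subgroup.subset[OF K] unfolding inverse_pairs_def by auto
    then have "(\<lambda>g. inv g) ` \<Omega> = \<Omega>"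
      using T by (simp add: image_Union subset_iff cong: SUP_cong)
    moreover have "\<Omega> \<subseteq> K - {\<one>}" using T inverse_pairs_subset[OF K] by blast
    ultimately show "\<Omega> \<in> sym_subsets K" unfolding sym_subsets_def by blast
  qed
qed

lemma sum_sym_subsets_prod:
  fixes x :: "'c::comm_semiring_1"
  assumes K: "subgroup K G" and fin: "finite K"
  shows "(\<Sum>\<Omega>\<in>sym_subsets K. x ^ card \<Omega>) = (\<Prod>A\<in>inverse_pairs K. x ^ card A + 1)"
proof -
  have disj: "disjoint (inverse_pairs K)"
    by (rule inverse_pairs_disjoint[OF subgroup.subset[OF K]])
  have "{} \<notin> inverse_pairs K" unfolding inverse_pairs_def by blast
  then have "(\<Sum>\<Omega>\<in>sym_subsets K. x ^ card \<Omega>) = (\<Sum>T\<in>Pow (inverse_pairs K). x ^ card (\<Union>T))"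
    unfolding sym_subsets_eq_Unions[OF K] by (simp add: sum.reindex inj_on_Union_Pow[OF disj])
  also have "\<dots> = (\<Prod>A\<in>inverse_pairs K. x ^ card A + 1)"
    using fin disj finite_inverse_pair by (intro sum_power_card_Union_Pow) (auto simp: inverse_pairs_def)
  finally show ?thesis .
qed

lemma card_inverse_pair:
  assumes "A \<in> inverse_pairs K"
  shows "card A = 1 \<or> card A = 2"
proof -
  have "card {g, h} = 1 \<or> card {g, h} = 2" for g h :: 'a by (cases "g = h") auto
  then show ?thesis using assms unfolding inverse_pairs_def by blast
qed

lemma singleton_inverse_pairs:
  assumes "K \<subseteq> carrier G"
  shows "{A \<in> inverse_pairs K. card A = 1} = (\<lambda>g. {g}) ` O2 G K"
proof -
  have self_inverse: "inv g = g \<longleftrightarrow> g \<otimes> g = \<one>" if "g \<in> carrier G" for g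
    using that by (metis inv_equality r_inv)
  have "card {g, inv g} = 1 \<longleftrightarrow> inv g = g" for g by (cases "inv g = g") auto
  then have "{A \<in> inverse_pairs K. card A = 1} = (\<lambda>g. {g, inv g}) ` {g \<in> K - {\<one>}. inv g = g}"
    unfolding inverse_pairs_def by auto
  also have "\<dots> = (\<lambda>g. {g}) ` O2 G K"
    using assms self_inverse unfolding O2_def by (intro image_cong) auto
  finally show ?thesis .
qed

lemma card_singleton_inverse_pairs:
  assumes "K \<subseteq> carrier G"
  shows "card {A \<in> inverse_pairs K. card A = 1} = card (O2 G K)"
  unfolding singleton_inverse_pairs[OF assms] by (simp add: card_image)

definition two_pairs :: "'a set \<Rightarrow> nat" where
  "two_pairs K = card {A \<in> inverse_pairs K. card A = 2}"

lemma card_subgroup_O2: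
  assumes K: "subgroup K G" and fin: "finite K"
  shows "card K = 1 + card (O2 G K) + 2 * two_pairs K"
proof -
  have Kc: "K \<subseteq> carrier G" using K by (rule subgroup.subset)
  let ?P = "inverse_pairs K"
  let ?P1 = "{A \<in> ?P. card A = 1}" and ?P2 = "{A \<in> ?P. card A = 2}"
  have finP: "finite ?P" using fin unfolding inverse_pairs_def by simp
  have nonempty: "card K \<noteq> 0" using fin subgroup.one_closed[OF K] by auto
  have "card K - 1 = card (\<Union>?P)"
    using fin subgroup.one_closed[OF K] by (simp add: Union_inverse_pairs[OF K])
  also have "\<dots> = sum card ?P"
    using inverse_pairs_disjoint[OF Kc] finite_inverse_pair by (rule card_Union_disjoint)
  also have "\<dots> = sum card ?P1 + sum card ?P2"
    using finP card_inverse_pair by (rule sum.split_card_one_two)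
  also have "\<dots> = (\<Sum>A\<in>?P1. 1) + (\<Sum>A\<in>?P2. 2)"
    by (intro arg_cong2[where f = "(+)"] sum.cong) auto
  also have "\<dots> = card ?P1 + 2 * card ?P2" by simp
  also have "\<dots> = card (O2 G K) + 2 * two_pairs K"
    by (simp only: card_singleton_inverse_pairs[OF Kc] two_pairs_def)
  finally show ?thesis using nonempty by linarith
qed

lemma sum_sym_subsets:
  fixes x :: real
  assumes K: "subgroup K G" and fin: "finite K"
  shows "(\<Sum>\<Omega>\<in>sym_subsets K. x ^ card \<Omega>)
         = (1 + x\<^sup>2) ^ ((card K - card (O2 G K) - 1) div 2) * (1 + x) ^ card (O2 G K)"
proof -
  have Kc: "K \<subseteq> carrier G" using K by (rule subgroup.subset)
  let ?P = "inverse_pairs K"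
  let ?P1 = "{A \<in> ?P. card A = 1}" and ?P2 = "{A \<in> ?P. card A = 2}"
  have finP: "finite ?P" using fin unfolding inverse_pairs_def by simp
  have "(\<Sum>\<Omega>\<in>sym_subsets K. x ^ card \<Omega>) = (\<Prod>A\<in>?P. x ^ card A + 1)"
    by (rule sum_sym_subsets_prod[OF K fin])
  also have "\<dots> = (\<Prod>A\<in>?P1. x ^ card A + 1) * (\<Prod>A\<in>?P2. x ^ card A + 1)"
    using finP card_inverse_pair by (rule prod.split_card_one_two)
  also have "\<dots> = (\<Prod>A\<in>?P1. 1 + x) * (\<Prod>A\<in>?P2. 1 + x\<^sup>2)"
    by (intro arg_cong2[where f = "(*)"] prod.cong) auto
  also have "\<dots> = (1 + x) ^ card ?P1 * (1 + x\<^sup>2) ^ card ?P2" by simp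
  also have "\<dots> = (1 + x) ^ card (O2 G K) * (1 + x\<^sup>2) ^ two_pairs K"
    by (simp only: card_singleton_inverse_pairs[OF Kc] two_pairs_def)
  also have "two_pairs K = (card K - card (O2 G K) - 1) div 2"
    using card_subgroup_O2[OF K fin] by simp
  finally show ?thesis by (simp only: mult.commute)
qed

text \<open>At x = 1 the same polynomial is a power of two, since |K| - |O_2(K)| - 1 is
  even.\<close>

lemma O2_summand_at_one:
  assumes K: "subgroup K G" and fin: "finite K"
  shows "(1 + 1\<^sup>2) ^ ((card K - card (O2 G K) - 1) div 2) * (1 + 1) ^ card (O2 G K)
         = (2::real) ^ ((card K + card (O2 G K) - 1) div 2)"
proof -
  have "card K = 1 + card (O2 G K) + 2 * two_pairs K" by (rule card_subgroup_O2[OF K fin])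
  then show ?thesis by (simp add: power_add)
qed

section \<open>Inverse-closed generating sets\<close>

definition gen_poly :: "'a set \<Rightarrow> real \<Rightarrow> real" where
  "gen_poly H x = (\<Sum>\<Omega>\<in>{\<Omega> \<in> sym_subsets (carrier G). generate G \<Omega> = H}. x ^ card \<Omega>)"

lemma sum_sym_subsets_by_generated:
  assumes fin: "finite (carrier G)" and K: "subgroup K G"
  shows "(\<Sum>\<Omega>\<in>sym_subsets K. x ^ card \<Omega>) = (\<Sum>H\<in>{H. subgroup H G \<and> H \<subseteq> K}. gen_poly H x)"
proof -
  have Kc: "K \<subseteq> carrier G" using K by (rule subgroup.subset)
  have finSym: "finite (sym_subsets K)"
  proof (rule finite_subset)
    show "sym_subsets K \<subseteq> Pow K" by (auto simp: sym_subsets_def)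
    show "finite (Pow K)" using fin Kc by (simp add: finite_subset)
  qed
  have gen_sub: "generate G \<Omega> \<subseteq> K \<longleftrightarrow> \<Omega> \<subseteq> K" if "\<Omega> \<subseteq> carrier G" for \<Omega>
    using generate_subgroup_incl[OF _ K] generate.incl[of _ \<Omega> G] by blast
  have "generate G ` sym_subsets K \<subseteq> {H. subgroup H G \<and> H \<subseteq> K}"
  proof
    fix H assume "H \<in> generate G ` sym_subsets K"
    then obtain \<Omega> where \<Omega>: "\<Omega> \<subseteq> K" "H = generate G \<Omega>" by (auto simp: sym_subsets_def)
    then show "H \<in> {H. subgroup H G \<and> H \<subseteq> K}"
      using Kc gen_sub[of \<Omega>] generate_is_subgroup[of \<Omega>] by auto
  qed
  then have "(\<Sum>\<Omega>\<in>sym_subsets K. x ^ card \<Omega>)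
      = (\<Sum>H\<in>{H. subgroup H G \<and> H \<subseteq> K}. \<Sum>\<Omega>\<in>{\<Omega> \<in> sym_subsets K. generate G \<Omega> = H}. x ^ card \<Omega>)"
    using finite_subgroups[OF fin] by (intro sum.group[OF finSym, symmetric]) auto
  also have "\<dots> = (\<Sum>H\<in>{H. subgroup H G \<and> H \<subseteq> K}. gen_poly H x)"
  proof (intro sum.cong refl)
    fix H assume "H \<in> {H. subgroup H G \<and> H \<subseteq> K}"
    then have "{\<Omega> \<in> sym_subsets K. generate G \<Omega> = H}
             = {\<Omega> \<in> sym_subsets (carrier G). generate G \<Omega> = H}"
      using Kc gen_sub unfolding sym_subsets_def by blast
    then show "(\<Sum>\<Omega>\<in>{\<Omega> \<in> sym_subsets K. generate G \<Omega> = H}. x ^ card \<Omega>) = gen_poly H x"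
      by (simp add: gen_poly_def)
  qed
  finally show ?thesis .
qed

lemma gen_sets_eq: "gen_sets G = {\<Omega> \<in> sym_subsets (carrier G). generate G \<Omega> = carrier G}"
  unfolding gen_sets_def sym_subsets_def by blast

lemma empty_in_gen_sets_iff: "{} \<in> gen_sets G \<longleftrightarrow> carrier G = {\<one>}"
  unfolding gen_sets_def by (auto simp: generate_empty)

end

section \<open>Cayley graphs of abelian groups\<close>

context comm_group begin

text \<open>In an abelian group every inner automorphism is the identity, so each orbit
  counted by cayley_count is a single generating set.\<close>

lemma inner_aut_trivial:
  assumes "\<Omega> \<subseteq> carrier G" "g \<in> carrier G"
  shows "inner_aut G g ` \<Omega> = \<Omega>"
proof -
  have "inner_aut G g y = y" if "y \<in> carrier G" for y
    using that assms(2) by (simp add: inner_aut_def m_comm[of g y] m_assoc)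
  then show ?thesis using assms(1) by (simp add: subset_eq image_cong[of _ _ _ id])
qed

lemma cayley_count_abelian: "cayley_count G k = card {\<Omega> \<in> gen_sets G. card \<Omega> = k}"
proof -
  have orbit: "{inner_aut G g ` \<Omega> | g. g \<in> carrier G} = {\<Omega>}" if "\<Omega> \<in> gen_sets G" for \<Omega>
    using that inner_aut_trivial one_closed unfolding gen_sets_def by blast
  have "{{inner_aut G g ` \<Omega> | g. g \<in> carrier G} | \<Omega>. \<Omega> \<in> gen_sets G \<and> card \<Omega> = k}
      = (\<lambda>\<Omega>. {inner_aut G g ` \<Omega> | g. g \<in> carrier G}) ` {\<Omega> \<in> gen_sets G. card \<Omega> = k}"
    by blast
  also have "\<dots> = (\<lambda>\<Omega>. {\<Omega>}) ` {\<Omega> \<in> gen_sets G. card \<Omega> = k}"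
    using orbit by (intro image_cong) simp_all
  finally show ?thesis unfolding cayley_count_def by (simp add: card_image)
qed

lemma Psi_abelian:
  assumes fin: "finite (carrier G)"
  shows "Psi G x = gen_poly (carrier G) x - (if carrier G = {\<one>} then 1 else 0)"
proof -
  let ?n = "card (carrier G)"
  have fin_gs: "finite (gen_sets G)"
  proof (rule finite_subset)
    show "gen_sets G \<subseteq> Pow (carrier G)" unfolding gen_sets_def by blast
  qed (simp add: fin)
  have fin_mem: "finite \<Omega>" if "\<Omega> \<in> gen_sets G" for \<Omega>
    using that fin unfolding gen_sets_def by (blast intro: finite_subset)
  have size: "card \<Omega> \<in> {0..?n - 1}" if "\<Omega> \<in> gen_sets G" for \<Omega>
  proof -
    have "\<Omega> \<subseteq> carrier G - {\<one>}" using that unfolding gen_sets_def by blast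
    then have "card \<Omega> \<le> card (carrier G - {\<one>})" using fin by (intro card_mono) simp_all
    also have "\<dots> = ?n - 1" using one_closed by (rule card_Diff_singleton)
    finally have "card \<Omega> \<le> ?n - 1" .
    then show ?thesis by (simp only: atLeastAtMost_iff le0 simp_thms)
  qed
  have "{\<Omega> \<in> gen_sets G. card \<Omega> = 0} = {\<Omega> \<in> gen_sets G. \<Omega> = {}}"
    using fin_mem by (metis (lifting) card.empty card_0_eq)
  also have "\<dots> = (if {} \<in> gen_sets G then {{}} else {})" by auto
  finally have empty_term: "card {\<Omega> \<in> gen_sets G. card \<Omega> = 0} = (if carrier G = {\<one>} then 1 else 0)"
    by (simp add: empty_in_gen_sets_iff)
  have "gen_poly (carrier G) x = (\<Sum>\<Omega>\<in>gen_sets G. x ^ card \<Omega>)"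
    by (simp add: gen_poly_def gen_sets_eq)
  also have "\<dots> = (\<Sum>k=0..?n - 1. \<Sum>\<Omega>\<in>{\<Omega> \<in> gen_sets G. card \<Omega> = k}. x ^ card \<Omega>)"
    using size by (intro sum.group[OF fin_gs, symmetric]) auto
  also have "\<dots> = (\<Sum>k=0..?n - 1. real (cayley_count G k) * x ^ k)"
    by (simp add: cayley_count_abelian)
  also have "\<dots> = (if carrier G = {\<one>} then 1 else 0) + Psi G x"
    unfolding Psi_def by (simp add: sum.atLeast_Suc_atMost cayley_count_abelian empty_term)
  finally show ?thesis by simp
qed


text \<open>The main formula: Moebius inversion of the subset counts of all subgroups gives
  the count of inverse-closed generating sets, and the Moebius sum accounts for the
  empty generating set of the trivial group.\<close>

lemma Psi_mobius_formula:
  fixes x :: real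
  assumes fin: "finite (carrier G)"
  shows "Psi G x = (\<Sum>K\<in>{K. subgroup K G}. real_of_int (sg_mobius G K) *
           ((1 + x\<^sup>2) ^ ((card K - card (O2 G K) - 1) div 2) * (1 + x) ^ card (O2 G K) - 1))"
proof -
  have "(\<Sum>K\<in>{K. subgroup K G}. real_of_int (sg_mobius G K) *
           ((1 + x\<^sup>2) ^ ((card K - card (O2 G K) - 1) div 2) * (1 + x) ^ card (O2 G K) - 1))
      = (\<Sum>K\<in>{K. subgroup K G}. real_of_int (sg_mobius G K) * (\<Sum>\<Omega>\<in>sym_subsets K. x ^ card \<Omega>))
        - (\<Sum>K\<in>{K. subgroup K G}. real_of_int (sg_mobius G K))"
    by (simp add: sum_sym_subsets finite_subgroup[OF fin] right_diff_distrib sum_subtractf)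
  also have "\<dots> = gen_poly (carrier G) x - (if carrier G = {\<one>} then 1 else 0)"
    by (simp only: mobius_inversion[OF fin sum_sym_subsets_by_generated[OF fin]] sum_mobius[OF fin])
  also have "\<dots> = Psi G x" by (rule Psi_abelian[OF fin, symmetric])
  finally show ?thesis ..
qed

lemma Psi_at_one:
  assumes fin: "finite (carrier G)"
  shows "Psi G 1 = (\<Sum>K\<in>{K. subgroup K G}. real_of_int (sg_mobius G K) *
           (2 ^ ((card K + card (O2 G K) - 1) div 2) - 1))"
  unfolding Psi_mobius_formula[OF fin]
proof (intro sum.cong refl)
  fix K assume "K \<in> {K. subgroup K G}"
  then have "(1 + 1\<^sup>2) ^ ((card K - card (O2 G K) - 1) div 2) * (1 + 1) ^ card (O2 G K)
             = (2::real) ^ ((card K + card (O2 G K) - 1) div 2)"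
    using O2_summand_at_one finite_subgroup[OF fin] by simp
  then show "real_of_int (sg_mobius G K) *
        ((1 + 1\<^sup>2) ^ ((card K - card (O2 G K) - 1) div 2) * (1 + 1) ^ card (O2 G K) - 1)
      = real_of_int (sg_mobius G K) * (2 ^ ((card K + card (O2 G K) - 1) div 2) - 1)"
    by (simp only:)
qed

end

theorem theorem3p1:
  fixes G :: "('a, 'b) monoid_scheme"
  assumes "comm_group G" and "finite (carrier G)"
  shows "(\<forall>x::real. Psi G x =
            (\<Sum>K\<in>{K. subgroup K G}. real_of_int (sg_mobius G K) *
               ((1 + x\<^sup>2) ^ ((card K - card (O2 G K) - 1) div 2) * (1 + x) ^ card (O2 G K) - 1)))
       \<and> Ecount G = Psi G 1
       \<and> Psi G 1 = (\<Sum>K\<in>{K. subgroup K G}. real_of_int (sg_mobius G K) *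
               (2 ^ ((card K + card (O2 G K) - 1) div 2) - 1))"
proof -
  interpret comm_group G by fact
  show ?thesis
    unfolding Ecount_def using Psi_mobius_formula[OF assms(2)] Psi_at_one[OF assms(2)] by blast
qed

end
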